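(* For $l,m,n,u,v\in\mathbb{N}$, \[ \sum_{k=-\infty}^\infty (-1)^k\binom{l+m}{l+k}\binom{m+n}{m+k}\binom{n+l}{n+k}\binom{u+v}{u+k}\binom{u+v}{v+k} =\binom{u+v}{u}\sum_{k=0}^{\infty} \frac{(l+m+n-k)!\,(u+v+k)!}{k!\,(l-k)!\,(m-k)!\,(n-k)!\,(u+k)!\,(v+k)!}. \]
   Context: Convention: $1/j!=0$ for negative integers $j$, and binomial coefficients $\binom{a}{b}$ with $b<0$ or $b>a$ are $0$. *)

theory Defs
  imports "HOL-Analysis.Analysis"
begin

definition zbinom :: "int \<Rightarrow> int \<Rightarrow> int" where
  "zbinom a b = (if 0 \<le> b \<and> b \<le> a then int (nat a choose nat b) else 0)"

definition invfact :: "int \<Rightarrow> real" where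
  "invfact j = (if j < 0 then 0 else 1 / fact (nat j))"

end

theory Submission
  imports Defs
begin

(* Both sides are finite sums, since invfact vanishes at negative integers. The product of the
   first three binomials expands as
     C(l+m,l+k) C(m+n,m+k) C(n+l,n+k) = sum_j (l+m+n-j)! / ((l-j)! (m-j)! (n-j)! (j-k)! (j+k)!).
   After exchanging the sums, the inner sum over k is, up to the factor ((u+v)!)^2, Dixon's sum
     sum_k (-1)^k / ((a+k)! (a-k)! (b+k)! (b-k)! (c+k)! (c-k)!)
       = (a+b+c)! / (a! b! c! (a+b)! (b+c)! (c+a)!)
   at (a,b,c) = (j,u,v), and this evaluation is the j-th summand of the right-hand side.
   Both identities are proved by creative telescoping: the summand satisfies a first-order
   recurrence in a (resp. l) up to a difference G(k+1) - G(k) of an explicit certificate G that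
   vanishes at the ends of the summation range, so the sum obeys the same recurrence as the
   closed form, and induction on a (resp. l) finishes. *)

lemma invfact_neg: "j < 0 \<Longrightarrow> invfact j = 0"
  by (simp add: invfact_def)

lemma invfact_0 [simp]: "invfact 0 = 1"
  by (simp add: invfact_def)

lemma fact_mult_invfact: "fact n * invfact (int n) = 1"
  by (simp add: invfact_def)

lemma invfact_pred: "invfact (x - 1) = of_int x * invfact x"
proof (cases "x > 0")
  case True
  then have "nat x = Suc (nat (x - 1))" by simp
  with True show ?thesis by (simp add: invfact_def field_simps del: of_nat_Suc)
qed (simp add: invfact_def)

(* Stated with an equation premise so that rule application matches any syntactic form of the
   shifted argument. *)
lemma invfact_succ: "y = x + 1 \<Longrightarrow> invfact x = of_int y * invfact y"
  using invfact_pred[of y] by simp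

lemma invfact_succ2: "z = x + 1 \<Longrightarrow> y = x + 2 \<Longrightarrow> invfact x = of_int z * of_int y * invfact y"
  using invfact_pred[of y] invfact_pred[of "y - 1"] by simp

lemma sum_int_telescope:
  fixes G :: "int \<Rightarrow> 'a::ab_group_add"
  assumes "a \<le> b + 1"
  shows "(\<Sum>k = a..b. G (k + 1) - G k) = G (b + 1) - G a"
proof -
  from assms have "a - 1 \<le> b" by simp
  then show ?thesis
  proof (induction b rule: int_ge_induct)
    case (step b)
    then have "{a..b + 1} = insert (b + 1) {a..b}" by auto
    with step.IH show ?case by simp
  qed simp
qed

lemma zbinom_eq_fact_invfact:
  assumes "0 \<le> a"
  shows "real_of_int (zbinom a b) = fact (nat a) * invfact b * invfact (a - b)"
proof (cases "0 \<le> b \<and> b \<le> a")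
  case True
  then have "real (nat a choose nat b) = fact (nat a) / (fact (nat b) * fact (nat a - nat b))"
    by (intro binomial_fact nat_mono) simp
  moreover have "nat (a - b) = nat a - nat b"
    using True by (simp add: nat_diff_distrib)
  ultimately show ?thesis
    using True by (simp add: zbinom_def invfact_def)
qed (auto simp: zbinom_def invfact_neg)

definition dixon_term :: "int \<Rightarrow> int \<Rightarrow> int \<Rightarrow> int \<Rightarrow> real" where
  "dixon_term a b c k = (-1) powi k * invfact (a + k) * invfact (a - k) * invfact (b + k) * invfact (b - k)
     * invfact (c + k) * invfact (c - k)"

definition dixon_certificate :: "int \<Rightarrow> int \<Rightarrow> int \<Rightarrow> int \<Rightarrow> real" where
  "dixon_certificate a b c k = - (1/2) * (-1) powi k * invfact (a + k) * invfact (a + 1 - k)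
     * invfact (b + k - 1) * invfact (b - k) * invfact (c + k - 1) * invfact (c - k)"

lemma dixon_term_recurrence:
  "of_int ((a+1) * (a+b+1) * (a+c+1)) * dixon_term (a+1) b c k - of_int (a+b+c+1) * dixon_term a b c k
     = dixon_certificate a b c (k+1) - dixon_certificate a b c k"
proof -
  have shifts:
    "invfact (a + k) = of_int (a+1+k) * invfact (a+1+k)"
    "invfact (a - k) = of_int (a+1-k) * invfact (a+1-k)"
    "invfact (b + k) = of_int (b+1+k) * invfact (b+1+k)"
    "invfact (b - k) = of_int (b+1-k) * invfact (b+1-k)"
    "invfact (c + k) = of_int (c+1+k) * invfact (c+1+k)"
    "invfact (c - k) = of_int (c+1-k) * invfact (c+1-k)"
    "invfact (a + 1 - (k+1)) = of_int (a+1-k) * invfact (a+1-k)"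
    "invfact (b + (k+1) - 1) = of_int (b+1+k) * invfact (b+1+k)"
    "invfact (c + (k+1) - 1) = of_int (c+1+k) * invfact (c+1+k)"
    "invfact (b - (k+1)) = of_int (b-k) * of_int (b+1-k) * invfact (b+1-k)"
    "invfact (c - (k+1)) = of_int (c-k) * of_int (c+1-k) * invfact (c+1-k)"
    "invfact (b + k - 1) = of_int (b+k) * of_int (b+1+k) * invfact (b+1+k)"
    "invfact (c + k - 1) = of_int (c+k) * of_int (c+1+k) * invfact (c+1+k)"
    by (rule invfact_succ invfact_succ2; simp)+
  have sign: "(-1::real) powi (k + 1) = - ((-1) powi k)" by (simp add: power_int_add)
  have args: "a + (k + 1) = a + 1 + k" by simp
  show ?thesis
    unfolding dixon_term_def dixon_certificate_def shifts sign args
      of_int_add of_int_diff of_int_mult of_int_1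
    by algebra
qed

definition dixon_value :: "nat \<Rightarrow> nat \<Rightarrow> nat \<Rightarrow> real" where
  "dixon_value a b c = fact (a + b + c) * invfact (int a) * invfact (int b) * invfact (int c)
     * invfact (int a + int b) * invfact (int b + int c) * invfact (int c + int a)"

lemma dixon_value_recurrence:
  "of_int (int a + int b + int c + 1) * dixon_value a b c
     = of_int ((int a + 1) * (int a + int b + 1) * (int a + int c + 1)) * dixon_value (Suc a) b c"
proof -
  have "invfact (int a) = of_int (int (Suc a)) * invfact (int (Suc a))"
    "invfact (int a + int b) = of_int (int (Suc a) + int b) * invfact (int (Suc a) + int b)"
    "invfact (int c + int a) = of_int (int c + int (Suc a)) * invfact (int c + int (Suc a))"
    by (rule invfact_succ; simp)+
  then show ?thesis
    unfolding dixon_value_def by (simp add: algebra_simps)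
qed

lemma dixon_identity:
  assumes "int a \<le> N"
  shows "(\<Sum>k = -N..N. dixon_term (int a) (int b) (int c) k) = dixon_value a b c"
  using assms
proof (induction a arbitrary: N)
  case 0
  have "dixon_term 0 (int b) (int c) k = (if k = 0 then (invfact (int b) * invfact (int c))\<^sup>2 else 0)" for k
    using invfact_neg[of k] invfact_neg[of "-k"]
    by (cases k "0::int" rule: linorder_cases) (auto simp: dixon_term_def power2_eq_square)
  with 0 show ?case
    using fact_mult_invfact[of "b + c"] by (simp add: dixon_value_def power2_eq_square)
next
  case (Suc a)
  let ?a = "int a" and ?b = "int b" and ?c = "int c"
  let ?p = "of_int ((?a + 1) * (?a + ?b + 1) * (?a + ?c + 1)) :: real"
  have "?p * (\<Sum>k = -N..N. dixon_term (?a + 1) ?b ?c k)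
      - of_int (?a + ?b + ?c + 1) * (\<Sum>k = -N..N. dixon_term ?a ?b ?c k)
      = (\<Sum>k = -N..N. dixon_certificate ?a ?b ?c (k + 1) - dixon_certificate ?a ?b ?c k)"
    by (simp add: sum_distrib_left flip: sum_subtractf dixon_term_recurrence)
  also have "\<dots> = 0"
    using Suc.prems by (subst sum_int_telescope) (simp_all add: dixon_certificate_def invfact_neg)
  finally have "?p * (\<Sum>k = -N..N. dixon_term (?a + 1) ?b ?c k)
      = of_int (?a + ?b + ?c + 1) * dixon_value a b c"
    using Suc.IH[of N] Suc.prems by simp
  also have "\<dots> = ?p * dixon_value (Suc a) b c"
    by (rule dixon_value_recurrence)
  finally show ?case
    by (simp add: add_ac)
qed

definition triple_binom :: "nat \<Rightarrow> nat \<Rightarrow> nat \<Rightarrow> int \<Rightarrow> real" where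
  "triple_binom l m n k = fact (l + m) * fact (m + n) * fact (n + l)
     * invfact (int l + k) * invfact (int l - k) * invfact (int m + k) * invfact (int m - k)
     * invfact (int n + k) * invfact (int n - k)"

definition triple_binom_term :: "nat \<Rightarrow> nat \<Rightarrow> nat \<Rightarrow> int \<Rightarrow> nat \<Rightarrow> real" where
  "triple_binom_term l m n k j = fact (l + m + n - j) * invfact (int l - int j) * invfact (int m - int j)
     * invfact (int n - int j) * invfact (int j - k) * invfact (int j + k)"

definition triple_binom_certificate :: "nat \<Rightarrow> nat \<Rightarrow> nat \<Rightarrow> int \<Rightarrow> nat \<Rightarrow> real" where
  "triple_binom_certificate l m n k j = - fact (l + m + n + 1 - j) * invfact (int l + 1 - int j)
     * invfact (int m - int j) * invfact (int n - int j) * invfact (int j - 1 - k) * invfact (int j - 1 + k)"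

lemma triple_binom_term_recurrence:
  "of_int ((int l + k + 1) * (int l + 1 - k)) * triple_binom_term (Suc l) m n k j
     - of_nat ((l + m + 1) * (l + n + 1)) * triple_binom_term l m n k j
   = triple_binom_certificate l m n k (Suc j) - triple_binom_certificate l m n k j"
proof (cases "j \<le> l + m + n")
  case False
  then have "int m - int j < 0" "int m - int (Suc j) < 0" by auto
  then show ?thesis
    by (simp add: triple_binom_term_def triple_binom_certificate_def invfact_neg)
next
  case True
  have facts:
    "fact (Suc l + m + n - j) = of_int (int l + int m + int n + 1 - int j) * fact (l + m + n - j)"
    "fact (l + m + n + 1 - j) = of_int (int l + int m + int n + 1 - int j) * fact (l + m + n - j)"
    "fact (l + m + n + 1 - Suc j) = fact (l + m + n - j)"
    using True by (simp_all add: Suc_diff_le algebra_simps)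
  have shifts:
    "invfact (int l - int j) = of_int (int l + 1 - int j) * invfact (int l + 1 - int j)"
    "invfact (int l + 1 - int (Suc j)) = of_int (int l + 1 - int j) * invfact (int l + 1 - int j)"
    "invfact (int m - int (Suc j)) = of_int (int m - int j) * invfact (int m - int j)"
    "invfact (int n - int (Suc j)) = of_int (int n - int j) * invfact (int n - int j)"
    "invfact (int j - 1 - k) = of_int (int j - k) * invfact (int j - k)"
    "invfact (int j - 1 + k) = of_int (int j + k) * invfact (int j + k)"
    by (rule invfact_succ; simp)+
  have args: "int (Suc l) - int j = int l + 1 - int j" "int (Suc j) - 1 - k = int j - k"
    "int (Suc j) - 1 + k = int j + k"
    by simp_all
  show ?thesis
    unfolding triple_binom_term_def triple_binom_certificate_def facts shifts args
      of_int_add of_int_diff of_int_mult of_int_1 of_int_of_nat_eq of_nat_mult of_nat_add of_nat_1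
    by algebra
qed

lemma triple_binom_recurrence:
  "of_nat ((l + m + 1) * (l + n + 1)) * triple_binom l m n k
     = of_int ((int l + k + 1) * (int l + 1 - k)) * triple_binom (Suc l) m n k"
proof -
  have shifts:
    "invfact (int l + k) = of_int (int (Suc l) + k) * invfact (int (Suc l) + k)"
    "invfact (int l - k) = of_int (int (Suc l) - k) * invfact (int (Suc l) - k)"
    by (rule invfact_succ; simp)+
  have facts: "fact (Suc l + m) = of_nat (l + m + 1) * fact (l + m)"
    "fact (n + Suc l) = of_nat (l + n + 1) * fact (n + l)"
    by (simp_all add: algebra_simps)
  show ?thesis
    unfolding triple_binom_def shifts facts of_int_add of_int_diff of_int_mult of_int_of_nat_eq
      of_nat_Suc of_nat_mult of_nat_add of_int_1 of_nat_1
    by algebra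
qed

lemma triple_binom_uminus: "triple_binom l m n (-k) = triple_binom l m n k"
  by (simp add: triple_binom_def ac_simps)

lemma triple_binom_term_uminus: "triple_binom_term l m n (-k) j = triple_binom_term l m n k j"
  by (simp add: triple_binom_term_def ac_simps)

lemma triple_binom_term_diagonal: "triple_binom_term K m n (int K) K = triple_binom K m n (int K)"
proof -
  have "fact (K + m) * invfact (int m + int K) = 1" "fact (n + K) * invfact (int n + int K) = 1"
    using fact_mult_invfact[of "K + m"] fact_mult_invfact[of "n + K"] by (simp_all add: ac_simps)
  moreover have diag: "K + m + n - K = m + n" "int K - int K = 0" by simp_all
  ultimately show ?thesis
    unfolding triple_binom_term_def triple_binom_def diag invfact_0 by algebra
qed

lemma sum_triple_binom_term_diagonal:
  assumes "nat \<bar>k\<bar> < N"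
  shows "(\<Sum>j<N. triple_binom_term (nat \<bar>k\<bar>) m n k j) = triple_binom (nat \<bar>k\<bar>) m n k"
proof -
  let ?K = "nat \<bar>k\<bar>"
  have "triple_binom_term ?K m n k j = 0" if "j \<noteq> ?K" for j
  proof -
    from that have "int ?K - int j < 0 \<or> int j - k < 0 \<or> int j + k < 0" by linarith
    then show ?thesis by (auto simp: triple_binom_term_def invfact_neg)
  qed
  then have "(\<Sum>j<N. triple_binom_term ?K m n k j) = triple_binom_term ?K m n k ?K"
    using assms by (subst sum.mono_neutral_right[where S = "{?K}"]) auto
  also have "\<dots> = triple_binom ?K m n k"
    using triple_binom_term_diagonal[of "nat k"] triple_binom_term_diagonal[of "nat (-k)"]
    by (cases "k \<ge> 0") (simp_all add: triple_binom_uminus triple_binom_term_uminus)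
  finally show ?thesis .
qed

lemma triple_binom_expansion:
  assumes "l < N"
  shows "triple_binom l m n k = (\<Sum>j<N. triple_binom_term l m n k j)"
proof (cases "nat \<bar>k\<bar> \<le> l")
  case False
  then have "int l + k < 0 \<or> int l - k < 0" by linarith
  then have "triple_binom l m n k = 0" by (auto simp: triple_binom_def invfact_neg)
  moreover have "triple_binom_term l m n k j = 0" for j
  proof (cases "j \<le> l")
    case True
    with False have "int j - k < 0 \<or> int j + k < 0" by linarith
    then show ?thesis by (auto simp: triple_binom_term_def invfact_neg)
  qed (simp add: triple_binom_term_def invfact_neg)
  ultimately show ?thesis by simp
next
  case True
  then show ?thesis
    using assms
  proof (induction l arbitrary: N rule: nat_induct_at_least)
    case base
    then show ?case
      by (simp add: sum_triple_binom_term_diagonal)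
  next
    case (Suc l)
    let ?c = "of_int ((int l + k + 1) * (int l + 1 - k)) :: real"
    let ?d = "of_nat ((l + m + 1) * (l + n + 1)) :: real"
    have "?c * (\<Sum>j<N. triple_binom_term (Suc l) m n k j) - ?d * (\<Sum>j<N. triple_binom_term l m n k j)
        = (\<Sum>j<N. triple_binom_certificate l m n k (Suc j) - triple_binom_certificate l m n k j)"
      by (simp add: sum_distrib_left flip: sum_subtractf triple_binom_term_recurrence)
    also have "\<dots> = 0"
    proof -
      have "-1 - k < 0 \<or> k - 1 < 0" by linarith
      then show ?thesis
        using Suc.prems
        by (subst sum_lessThan_telescope) (auto simp: triple_binom_certificate_def invfact_neg)
    qed
    finally have "?c * (\<Sum>j<N. triple_binom_term (Suc l) m n k j) = ?d * triple_binom l m n k"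
      using Suc.IH[of N] Suc.prems by simp
    also have "\<dots> = ?c * triple_binom (Suc l) m n k"
      by (rule triple_binom_recurrence)
    moreover have "?c \<noteq> 0"
    proof -
      have "0 < (int l + k + 1) * (int l + 1 - k)"
        using Suc.hyps by (intro mult_pos_pos) linarith+
      then show ?thesis by (metis of_int_eq_0_iff less_irrefl)
    qed
    ultimately show ?case
      by simp
  qed
qed

lemma zbinom_triple_eq_triple_binom:
  "real_of_int (zbinom (int l + int m) (int l + k) * zbinom (int m + int n) (int m + k)
     * zbinom (int n + int l) (int n + k)) = triple_binom l m n k"
  by (simp add: zbinom_eq_fact_invfact triple_binom_def nat_add_distrib ac_simps)

lemma zbinom_product_eq_sum_dixon_term:
  assumes "l < N"
  shows "(-1) powi k * real_of_int (zbinom (int l + int m) (int l + k) * zbinom (int m + int n) (int m + k)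
           * zbinom (int n + int l) (int n + k) * zbinom (int u + int v) (int u + k)
           * zbinom (int u + int v) (int v + k))
    = (\<Sum>j<N. (fact (u + v))\<^sup>2 * fact (l + m + n - j) * invfact (int l - int j)
         * invfact (int m - int j) * invfact (int n - int j) * dixon_term (int j) (int u) (int v) k)"
    (is "?f = _")
proof -
  let ?U = "invfact (int u + k) * invfact (int u - k) * invfact (int v + k) * invfact (int v - k)"
  have uv: "real_of_int (zbinom (int u + int v) (int u + k) * zbinom (int u + int v) (int v + k))
      = (fact (u + v))\<^sup>2 * ?U"
    by (simp add: zbinom_eq_fact_invfact power2_eq_square nat_add_distrib ac_simps)
  have "?f = (-1) powi k * (real_of_int (zbinom (int l + int m) (int l + k)
      * zbinom (int m + int n) (int m + k) * zbinom (int n + int l) (int n + k))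
      * real_of_int (zbinom (int u + int v) (int u + k) * zbinom (int u + int v) (int v + k)))"
    by (simp only: of_int_mult mult.assoc)
  also have "\<dots> = (\<Sum>j<N. (-1) powi k * triple_binom_term l m n k j * ((fact (u + v))\<^sup>2 * ?U))"
    unfolding zbinom_triple_eq_triple_binom uv triple_binom_expansion[OF assms]
    by (simp add: sum_distrib_left sum_distrib_right mult.assoc)
  finally show ?thesis
    by (simp add: triple_binom_term_def dixon_term_def ac_simps)
qed

lemma fact_sq_mult_dixon_value:
  "(fact (u + v))\<^sup>2 * dixon_value j u v
     = real (u + v choose u) * fact (u + v + j) * invfact (int j) * invfact (int u + int j) * invfact (int v + int j)"
proof -
  have "fact (u + v) * invfact (int u + int v) = 1"
    "fact (u + v) * invfact (int u) * invfact (int v) = real (u + v choose u)"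
    using fact_mult_invfact[of "u + v"] binomial_fact[of u "u + v", where 'a = real]
    by (simp_all add: invfact_def)
  moreover have args: "j + u + v = u + v + j" "int j + int u = int u + int j"
    by simp_all
  ultimately show ?thesis
    unfolding dixon_value_def args by algebra
qed

theorem corollary5p8:
  fixes l m n u v :: nat
  shows "(\<Sum>\<^sub>\<infinity>k::int. (-1) powi k *
            of_int (zbinom (int l + int m) (int l + k) * zbinom (int m + int n) (int m + k)
                  * zbinom (int n + int l) (int n + k) * zbinom (int u + int v) (int u + k)
                  * zbinom (int u + int v) (int v + k)) :: real)
       = real (u + v choose u) *
         (\<Sum>\<^sub>\<infinity>k::nat. fact (l + m + n - k) * fact (u + v + k)
             * invfact (int k) * invfact (int l - int k) * invfact (int m - int k)
             * invfact (int n - int k) * invfact (int u + int k) * invfact (int v + int k))"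
  (is "infsum ?f UNIV = ?C * infsum ?g UNIV")
proof -
  \<comment> \<open>the window must contain the ranges 0 <= j <= l and -l <= k <= m of the nonzero summands\<close>
  define N where "N = l + m + 1"
  define a where "a j = fact (l + m + n - j) * invfact (int l - int j) * invfact (int m - int j)
      * invfact (int n - int j)" for j
  have "l < N"
    by (simp add: N_def)
  have "infsum ?f UNIV = (\<Sum>k = - int N..int N. ?f k)"
    by (intro infsumI has_sum_finite_neutralI) (auto simp: zbinom_def N_def)
  also have "\<dots> = (\<Sum>k = - int N..int N. \<Sum>j<N. (fact (u + v))\<^sup>2 * a j * dixon_term (int j) (int u) (int v) k)"
    using zbinom_product_eq_sum_dixon_term[OF \<open>l < N\<close>] by (simp add: a_def mult.assoc)
  also have "\<dots> = (\<Sum>j<N. a j * ((fact (u + v))\<^sup>2 * (\<Sum>k = - int N..int N. dixon_term (int j) (int u) (int v) k)))"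
    by (simp add: sum.swap[of _ "{..<N}"] sum_distrib_left ac_simps)
  also have "\<dots> = (\<Sum>j<N. ?C * ?g j)"
    by (intro sum.cong refl) (simp add: dixon_identity fact_sq_mult_dixon_value, simp add: a_def ac_simps)
  also have "\<dots> = ?C * infsum ?g UNIV"
    using \<open>l < N\<close> by (subst infsumI[OF has_sum_finite_neutralI[where B = "{..<N}"]])
      (auto simp: invfact_neg sum_distrib_left)
  finally show ?thesis .
qed

end
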